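(* Let $\mathcal K$ be a simplicial complex on $[m]$, and let $\mathcal L$ be the simplicial complex on $[m+1]$ given by $$\mathcal L=\{\,I: I\subset[m]\,\}\ \cup\ \{\,I\cup\{m+1\}: I\in\mathcal K\,\}$$ (the union of the full simplex on $[m]$ and the cone over $\mathcal K$ with apex $m+1$). Then there is a homotopy equivalence $U(\mathcal K)\simeq D(\mathcal L)$, where $D(\mathcal L)\subset\mathbb C^{m+1}$. The same holds for real arrangement complements: $U_{\mathbb R}(\mathcal K)\simeq D_{\mathbb R}(\mathcal L)$.
   Context: A simplicial complex on a finite set $V$ is a collection of subsets of $V$ containing $\varnothing$ and closed under taking subsets. For a simplicial complex $\mathcal K$ on $[n]$ and $I=\{i_1,\dots,i_k\}\subset[n]$ let $C_I=\{z\in\mathbb C^n: z_{i_1}=\dots=z_{i_k}=0\}$ and $D_I=\{z\in\mathbb C^n: z_{i_1}=\dots=z_{i_k}\}$; set $U(\mathcal K)=\mathbb C^n\setminus\bigcup_{I\notin\mathcal K}C_I$ and $D(\mathcal K)=\mathbb C^n\setminus\bigcup_{I\notin\mathcal K}D_I$. $U_{\mathbb R}$ and $D_{\mathbb R}$ are defined analogously in $\mathbb R^n$. *)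

theory Defs
  imports "HOL-Analysis.Analysis"
begin

definition simplicial_complex :: "nat set \<Rightarrow> nat set set \<Rightarrow> bool" where
  "simplicial_complex V K \<longleftrightarrow> K \<subseteq> Pow V \<and> {} \<in> K \<and> (\<forall>I\<in>K. \<forall>J. J \<subseteq> I \<longrightarrow> J \<in> K)"

definition coord_space :: "nat \<Rightarrow> (nat \<Rightarrow> 'a::zero) set" where
  "coord_space n = {z. \<forall>i. i \<notin> {1..n} \<longrightarrow> z i = 0}"

definition coord_top :: "nat \<Rightarrow> (nat \<Rightarrow> 'a::{zero,topological_space}) topology" where
  "coord_top n = subtopology (product_topology (\<lambda>i. euclidean) UNIV) (coord_space n)"

definition C_sub :: "nat \<Rightarrow> nat set \<Rightarrow> (nat \<Rightarrow> 'a::zero) set" where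
  "C_sub n I = {z \<in> coord_space n. \<forall>i\<in>I. z i = 0}"

definition D_sub :: "nat \<Rightarrow> nat set \<Rightarrow> (nat \<Rightarrow> 'a::zero) set" where
  "D_sub n I = {z \<in> coord_space n. \<forall>i\<in>I. \<forall>j\<in>I. z i = z j}"

definition U_compl :: "nat \<Rightarrow> nat set set \<Rightarrow> (nat \<Rightarrow> 'a::zero) set" where
  "U_compl n K = coord_space n - (\<Union>I\<in>{I. I \<subseteq> {1..n} \<and> I \<notin> K}. C_sub n I)"

definition D_compl :: "nat \<Rightarrow> nat set set \<Rightarrow> (nat \<Rightarrow> 'a::zero) set" where
  "D_compl n K = coord_space n - (\<Union>I\<in>{I. I \<subseteq> {1..n} \<and> I \<notin> K}. D_sub n I)"

definition cone_ext :: "nat \<Rightarrow> nat set set \<Rightarrow> nat set set" where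
  "cone_ext m K = {I. I \<subseteq> {1..m}} \<union> {insert (Suc m) I | I. I \<in> K}"

end

theory Submission
  imports Defs
begin

text \<open>Every non-face of the cone complex \<open>L\<close> contains the apex \<open>m + 1\<close> and has the form
  \<open>I \<union> {m + 1}\<close> with \<open>I \<notin> K\<close>. Hence \<open>z \<in> D(L)\<close> iff every non-face \<open>I\<close> of \<open>K\<close> has some
  \<open>z\<^sub>i \<noteq> z\<^sub>m\<^sub>+\<^sub>1\<close>: so \<open>D(L)\<close> is invariant under translation along the diagonal
  \<open>(1, \<dots>, 1)\<close>, and its slice \<open>z\<^sub>m\<^sub>+\<^sub>1 = 0\<close> is exactly \<open>U(K)\<close>. The translations
  \<open>z \<mapsto> z - t z\<^sub>m\<^sub>+\<^sub>1 (1, \<dots>, 1)\<close>, \<open>0 \<le> t \<le> 1\<close>, deformation retract \<open>D(L)\<close> onto that slice.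
  Nothing depends on the field, so real and complex coordinates are treated together.\<close>

lemma continuous_map_scaleR [continuous_intros]:
  fixes g :: "'x \<Rightarrow> 'b::real_normed_vector"
  shows "continuous_map X euclidean f \<Longrightarrow> continuous_map X euclidean g
    \<Longrightarrow> continuous_map X euclidean (\<lambda>x. f x *\<^sub>R g x)"
  by (simp add: continuous_map_atin tendsto_scaleR)

lemma subtopology_coord_top:
  "subtopology (coord_top n) S = subtopology (product_topology (\<lambda>i. euclidean) UNIV) (coord_space n \<inter> S)"
  by (simp only: coord_top_def subtopology_subtopology)

lemma D_compl_subset_coord_space: "D_compl n L \<subseteq> coord_space n"
  by (auto simp: D_compl_def)

lemma U_compl_subset_coord_space: "U_compl n K \<subseteq> coord_space n"
  by (auto simp: U_compl_def)

definition diag_shift :: "nat \<Rightarrow> real \<Rightarrow> (nat \<Rightarrow> 'a::real_normed_vector) \<Rightarrow> nat \<Rightarrow> 'a" where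
  "diag_shift n t z i = (if i \<in> {1..n} then z i - t *\<^sub>R z n else 0)"

lemma diag_shift_in_coord_space: "diag_shift n t z \<in> coord_space n"
  by (simp add: diag_shift_def coord_space_def)

lemma diag_shift_eq_iff:
  "i \<in> {1..n} \<Longrightarrow> j \<in> {1..n} \<Longrightarrow> diag_shift n t z i = diag_shift n t z j \<longleftrightarrow> z i = z j"
  by (simp add: diag_shift_def)

lemma diag_shift_in_D_sub_iff:
  assumes "z \<in> coord_space n" and "I \<subseteq> {1..n}"
  shows "diag_shift n t z \<in> D_sub n I \<longleftrightarrow> z \<in> D_sub n I"
  using assms diag_shift_eq_iff[of _ n _ t z] unfolding D_sub_def
  by (auto simp: diag_shift_in_coord_space subset_iff)

lemma diag_shift_in_D_compl:
  assumes "z \<in> D_compl n L"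
  shows "diag_shift n t z \<in> D_compl n L"
proof -
  have "z \<in> coord_space n"
    using assms by (simp add: D_compl_def)
  with assms show ?thesis
    unfolding D_compl_def by (auto simp: diag_shift_in_coord_space diag_shift_in_D_sub_iff)
qed

lemma diag_shift_0: "z \<in> coord_space n \<Longrightarrow> diag_shift n 0 z = z"
  by (auto simp: diag_shift_def coord_space_def)

lemma diag_shift_1_last: "0 < n \<Longrightarrow> diag_shift n 1 z n = 0"
  by (simp add: diag_shift_def)

lemma diag_shift_fixes_slice: "z \<in> coord_space n \<Longrightarrow> z n = 0 \<Longrightarrow> diag_shift n t z = z"
  by (auto simp: diag_shift_def coord_space_def)

lemma continuous_map_diag_shift:
  "continuous_map (prod_topology euclideanreal (product_topology (\<lambda>i. euclidean) UNIV))
     (product_topology (\<lambda>i. euclidean) UNIV) (\<lambda>(t, z). diag_shift n t z :: nat \<Rightarrow> 'a::real_normed_vector)"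
proof -
  have "continuous_map (prod_topology euclideanreal (product_topology (\<lambda>i. euclidean) UNIV)) euclidean
          (\<lambda>p. snd p k - fst p *\<^sub>R snd p n :: 'a)" for k
    by (intro continuous_intros continuous_map_fst continuous_map_product_projection
        continuous_map_compose[OF continuous_map_snd, unfolded o_def]) auto
  then show ?thesis
    by (auto simp: continuous_map_componentwise_UNIV diag_shift_def case_prod_beta)
qed

lemma slice_homotopy_equivalent_D_compl:
  assumes "0 < n"
  shows "subtopology (product_topology (\<lambda>i. euclidean) UNIV)
           ({z \<in> D_compl n L. z n = 0} :: (nat \<Rightarrow> 'a::real_normed_vector) set)
           homotopy_equivalent_space
         subtopology (product_topology (\<lambda>i. euclidean) UNIV) (D_compl n L :: (nat \<Rightarrow> 'a) set)"
    (is "?S homotopy_equivalent_space ?D")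
proof -
  let ?P = "product_topology (\<lambda>i. euclidean) UNIV :: (nat \<Rightarrow> 'a) topology"
  have "continuous_map (subtopology (prod_topology euclideanreal ?P) ({0..1} \<times> D_compl n L)) ?P
          (\<lambda>(t, z). diag_shift n t z)"
    by (rule continuous_map_from_subtopology[OF continuous_map_diag_shift])
  then have shift: "continuous_map (prod_topology (top_of_set {0..1}) ?D) ?D (\<lambda>(t, z). diag_shift n t z)"
    by (auto simp: subtopology_Times[symmetric] continuous_map_in_subtopology diag_shift_in_D_compl)
  have hom: "homotopic_with (\<lambda>x. True) ?D ?D id (diag_shift n 1)"
    unfolding homotopic_with[where P="\<lambda>x. True", simplified]
  proof (intro exI[of _ "\<lambda>(t, z). diag_shift n t z"] conjI ballI)
    fix z assume "z \<in> topspace ?D"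
    then have "z \<in> coord_space n"
      using D_compl_subset_coord_space by auto
    then show "(\<lambda>(t, z). diag_shift n t z) (0, z) = id z"
      by (simp add: diag_shift_0)
  qed (simp_all add: shift)
  then have "continuous_map ?D ?D (diag_shift n 1)"
    using homotopic_with_imp_continuous_maps by blast
  then have "continuous_map ?D ?S (diag_shift n 1)"
    by (auto simp: continuous_map_in_subtopology Pi_iff diag_shift_1_last assms)
  moreover have "continuous_map ?S ?D id"
    by (simp add: continuous_map_in_subtopology continuous_map_from_subtopology)
  moreover have "diag_shift n 1 z = z" if "z \<in> topspace ?S" for z
  proof (rule diag_shift_fixes_slice)
    show "z \<in> coord_space n" "z n = 0"
      using that D_compl_subset_coord_space by auto
  qed
  ultimately have "retraction_maps ?D ?S (diag_shift n 1) id"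
    by (simp add: retraction_maps_def)
  moreover have "homotopic_with (\<lambda>x. True) ?D ?D (id \<circ> diag_shift n 1) id"
    using homotopic_with_symD[OF hom] by simp
  ultimately have "?D homotopy_equivalent_space ?S"
    using deformation_retraction_imp_homotopy_equivalent_space by blast
  then show ?thesis
    using homotopy_equivalent_space_sym by blast
qed

lemma mem_D_compl:
  "z \<in> D_compl n L \<longleftrightarrow> z \<in> coord_space n \<and> (\<forall>J\<subseteq>{1..n}. J \<notin> L \<longrightarrow> z \<notin> D_sub n J)"
  unfolding D_compl_def by blast

lemma mem_cone_ext: "J \<in> cone_ext m K \<longleftrightarrow> J \<subseteq> {1..m} \<or> (\<exists>I\<in>K. J = insert (Suc m) I)"
  unfolding cone_ext_def by blast

lemma not_in_cone_ext_iff: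
  assumes "K \<subseteq> Pow {1..m}" and "J \<subseteq> {1..Suc m}"
  shows "J \<notin> cone_ext m K \<longleftrightarrow> (\<exists>I. I \<subseteq> {1..m} \<and> I \<notin> K \<and> J = insert (Suc m) I)"
proof
  have interval_Suc: "{1..Suc m} = insert (Suc m) {1..m}"
    by (simp add: atLeastAtMostSuc_conv)
  assume J: "J \<notin> cone_ext m K"
  then have "\<not> J \<subseteq> {1..m}"
    by (simp add: mem_cone_ext)
  then have "Suc m \<in> J"
    using assms(2) interval_Suc by (metis subset_insert)
  then have J_eq: "J = insert (Suc m) (J - {Suc m})"
    by blast
  show "\<exists>I. I \<subseteq> {1..m} \<and> I \<notin> K \<and> J = insert (Suc m) I"
  proof (intro exI conjI)
    show "J - {Suc m} \<subseteq> {1..m}"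
      using assms(2) interval_Suc by blast
    show "J - {Suc m} \<notin> K"
      using J J_eq mem_cone_ext by blast
  qed (fact J_eq)
next
  assume "\<exists>I. I \<subseteq> {1..m} \<and> I \<notin> K \<and> J = insert (Suc m) I"
  then obtain I where I: "I \<subseteq> {1..m}" "I \<notin> K" "J = insert (Suc m) I"
    by blast
  have Suc_notin: "Suc m \<notin> A" if "A \<subseteq> {1..m}" for A
    using that by auto
  show "J \<notin> cone_ext m K"
    unfolding mem_cone_ext
  proof (rule notI, elim disjE bexE)
    assume "J \<subseteq> {1..m}"
    then show False
      using I(3) Suc_notin by blast
  next
    fix I' assume I': "I' \<in> K" "J = insert (Suc m) I'"
    then have "I' \<subseteq> {1..m}"
      using assms(1) by blast
    then have "I' = I"
      using I I'(2) Suc_notin insert_ident by metis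
    then show False
      using I(2) I'(1) by simp
  qed
qed

lemma mem_D_compl_cone_ext:
  assumes "K \<subseteq> Pow {1..m}"
  shows "z \<in> D_compl (Suc m) (cone_ext m K) \<longleftrightarrow>
           z \<in> coord_space (Suc m) \<and> (\<forall>I\<subseteq>{1..m}. I \<notin> K \<longrightarrow> (\<exists>i\<in>I. z i \<noteq> z (Suc m)))"
proof -
  have "z \<in> D_sub (Suc m) (insert (Suc m) I) \<longleftrightarrow> z \<in> coord_space (Suc m) \<and> (\<forall>i\<in>I. z i = z (Suc m))" for I
    by (auto simp: D_sub_def)
  moreover have "I \<subseteq> {1..m} \<Longrightarrow> insert (Suc m) I \<subseteq> {1..Suc m}" for I
    by auto
  ultimately show ?thesis
    unfolding mem_D_compl using not_in_cone_ext_iff[OF assms] by metis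
qed

lemma mem_U_compl:
  "w \<in> U_compl m K \<longleftrightarrow> w \<in> coord_space m \<and> (\<forall>I\<subseteq>{1..m}. I \<notin> K \<longrightarrow> (\<exists>i\<in>I. w i \<noteq> 0))"
  unfolding U_compl_def C_sub_def by blast

lemma coord_space_eq_slice: "coord_space m = {z \<in> coord_space (Suc m). z (Suc m) = 0}"
  by (auto simp: coord_space_def le_Suc_eq)

lemma U_compl_eq_slice_D_compl_cone_ext:
  assumes "K \<subseteq> Pow {1..m}"
  shows "U_compl m K = {z \<in> D_compl (Suc m) (cone_ext m K). z (Suc m) = 0}"
  by (auto simp: mem_D_compl_cone_ext[OF assms] mem_U_compl coord_space_eq_slice[of m])

lemma U_compl_homotopy_equivalent_D_compl_cone_ext:
  assumes "K \<subseteq> Pow {1..m}"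
  shows "subtopology (coord_top m) (U_compl m K :: (nat \<Rightarrow> 'a::real_normed_vector) set)
           homotopy_equivalent_space
         subtopology (coord_top (Suc m)) (D_compl (Suc m) (cone_ext m K) :: (nat \<Rightarrow> 'a) set)"
proof -
  let ?P = "product_topology (\<lambda>i. euclidean) UNIV :: (nat \<Rightarrow> 'a) topology"
  have "subtopology (coord_top m) (U_compl m K) = subtopology ?P (U_compl m K)"
    using U_compl_subset_coord_space by (metis subtopology_coord_top Int_absorb1)
  also have "\<dots> = subtopology ?P {z \<in> D_compl (Suc m) (cone_ext m K). z (Suc m) = 0}"
    by (simp only: U_compl_eq_slice_D_compl_cone_ext[OF assms])
  finally have U: "subtopology (coord_top m) (U_compl m K) =
                   subtopology ?P {z \<in> D_compl (Suc m) (cone_ext m K). z (Suc m) = 0}" .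
  have D: "subtopology (coord_top (Suc m)) (D_compl (Suc m) (cone_ext m K)) =
           subtopology ?P (D_compl (Suc m) (cone_ext m K))"
    using D_compl_subset_coord_space by (metis subtopology_coord_top Int_absorb1)
  show ?thesis
    unfolding U D by (rule slice_homotopy_equivalent_D_compl) simp
qed

theorem theorem4p1:
  fixes m :: nat and K :: "nat set set"
  assumes "simplicial_complex {1..m} K"
  shows "(subtopology (coord_top m) (U_compl m K :: (nat \<Rightarrow> complex) set))
           homotopy_equivalent_space (subtopology (coord_top (Suc m)) (D_compl (Suc m) (cone_ext m K) :: (nat \<Rightarrow> complex) set))
       \<and> (subtopology (coord_top m) (U_compl m K :: (nat \<Rightarrow> real) set))
           homotopy_equivalent_space (subtopology (coord_top (Suc m)) (D_compl (Suc m) (cone_ext m K) :: (nat \<Rightarrow> real) set))"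
proof -
  have "K \<subseteq> Pow {1..m}"
    using assms by (simp add: simplicial_complex_def)
  then show ?thesis
    by (intro conjI U_compl_homotopy_equivalent_D_compl_cone_ext)
qed

end
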